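(* Let $n\ge 2$, $1\le k\le n$, and let $r_1 \le r_2 \le \cdots \le r_k$ be positive integers. Let $f(x) = x_1^{2r_1} + x_2^{2r_2} + \cdots + x_k^{2r_k}$ on $\mathbb{R}^n$. If $k \ge 2$, then for any bounded open neighborhood $U$ of $0$ and any $\gamma>0$, \[ \int_U \left|\frac{\nabla f}{f}\right|^\gamma\,dV < \infty \iff \gamma < 1 + \frac{r_1}{r_2} + \cdots + \frac{r_1}{r_k}. \] If $k=1$ (i.e. $f=x_1^{2r_1}$), the integral is finite if and only if $\gamma<1$. *)

theory Defs
  imports "HOL-Analysis.Analysis"
begin

definition grad :: "(real^'n \<Rightarrow> real) \<Rightarrow> real^'n \<Rightarrow> real^'n" where
  "grad g x = (\<chi> i. deriv (\<lambda>t. g (x + t *\<^sub>R axis i 1)) 0)"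

text \<open>f(x) = x_1^(2 r_1) + ... + x_k^(2 r_k), where coordinate number i of R^n is
  the component c i (c labels the coordinates 1..n).\<close>
definition fsum :: "(nat \<Rightarrow> nat) \<Rightarrow> nat \<Rightarrow> (nat \<Rightarrow> 'n) \<Rightarrow> real^'n \<Rightarrow> real" where
  "fsum r k c x = (\<Sum>i=1..k. (x $ c i) ^ (2 * r i))"

end

theory Submission
  imports Defs
begin

text \<open>Let \<sigma> = \<Sum>j=1..k. 1/(2 r_j). Near the origin the sublevel set {f \<le> t} lies in the box
  with half side lengths t^(1/(2 r_j)) in the first k coordinates, whose volume is a constant
  times t^\<sigma>; and where f \<ge> t/2 the ratio |\<nabla>f|/f is at most a constant times t^(-1/(2 r_1)),
  because r_1 is the smallest exponent. Cutting U into the dyadic levels t = 2^-m therefore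
  bounds the integral by a geometric series with ratio 2^(\<gamma>/(2 r_1) - \<sigma>). Conversely, the
  boxes on which x_1 lies between (t/2)^(1/(2 r_1)) and t^(1/(2 r_1)) while the other first k
  coordinates are at most (t/2)^(1/(2 r_j)) are pairwise disjoint for t = \<epsilon> 4^-l; on them
  f \<le> k t and |\<nabla>f|/f \<ge> (r_1/k) t^(-1/(2 r_1)), and their volume is again a constant times
  t^\<sigma>, so each contributes at least a fixed positive amount when \<gamma>/(2 r_1) \<ge> \<sigma>. Finally
  \<gamma>/(2 r_1) < \<sigma> is the condition \<gamma> < \<Sum>j=1..k. r_1/r_j of the theorem.\<close>

definition coord_box ::
    "(nat \<Rightarrow> 'n::finite) \<Rightarrow> nat \<Rightarrow> (nat \<Rightarrow> real) \<Rightarrow> (nat \<Rightarrow> real) \<Rightarrow> (real^'n) set"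
  where "coord_box c n L H = {x. \<forall>j\<in>{1..n}. L j \<le> x $ c j \<and> x $ c j \<le> H j}"

lemma sets_coord_box [measurable]: "coord_box c n L H \<in> sets borel"
  unfolding coord_box_def by measurable

lemma coord_box_eq_cbox:
  assumes "bij_betw c {1..n} UNIV"
  shows "coord_box c n L H = cbox (\<chi> i. L (inv_into {1..n} c i)) (\<chi> i. H (inv_into {1..n} c i))"
proof -
  have reindex: "(\<forall>j\<in>{1..n}. P j (c j)) \<longleftrightarrow> (\<forall>i. P (inv_into {1..n} c i) i)" for P
    using assms by (metis bij_betw_inv_into_left bij_betw_inv_into_right bij_betw_apply
        bij_betw_inv_into UNIV_I)
  have "x \<in> coord_box c n L H \<longleftrightarrow>
      (\<forall>i. L (inv_into {1..n} c i) \<le> x $ i \<and> x $ i \<le> H (inv_into {1..n} c i))" for x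
    using reindex[of "\<lambda>j y. L j \<le> x $ y \<and> x $ y \<le> H j"] by (simp add: coord_box_def)
  then show ?thesis
    by (auto simp: mem_box_cart)
qed

lemma emeasure_coord_box:
  assumes bij: "bij_betw c {1..n} UNIV" and le: "\<And>j. j \<in> {1..n} \<Longrightarrow> L j \<le> H j"
  shows "emeasure lborel (coord_box c n L H) = ennreal (\<Prod>j\<in>{1..n}. H j - L j)"
proof -
  define d where "d = inv_into {1..n} c"
  have d: "bij_betw d UNIV {1..n}"
    unfolding d_def using bij by (rule bij_betw_inv_into)
  have "emeasure lborel (coord_box c n L H) = ennreal (measure lborel (cbox (\<chi> i. L (d i)) (\<chi> i. H (d i))))"
    unfolding coord_box_eq_cbox[OF bij] d_def
    by (rule emeasure_eq_ennreal_measure) (simp add: emeasure_lborel_cbox_eq)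
  also have "\<dots> = ennreal (\<Prod>i\<in>UNIV. H (d i) - L (d i))"
    using le bij_betw_apply[OF d]
    by (subst content_cbox_cart) (auto simp: box_ne_empty inner_axis Basis_vec_def)
  also have "\<dots> = ennreal (\<Prod>j\<in>{1..n}. H j - L j)"
    using prod.reindex_bij_betw[OF d, of "\<lambda>j. H j - L j"] by simp
  finally show ?thesis .
qed

lemma emeasure_coord_box_scaled:
  assumes "bij_betw c {1..n} UNIV" and "t > 0" and "\<And>j. j \<in> {1..n} \<Longrightarrow> L j \<le> H j"
    and "\<And>j. j \<in> {1..n} \<Longrightarrow> H j - L j = t powr e j * d j"
  shows "emeasure lborel (coord_box c n L H) = ennreal (t powr (\<Sum>j\<in>{1..n}. e j) * (\<Prod>j\<in>{1..n}. d j))"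
proof -
  have "(\<Prod>j\<in>{1..n}. H j - L j) = (\<Prod>j\<in>{1..n}. t powr e j * d j)"
    using assms(4) by (rule prod.cong[OF refl])
  also have "\<dots> = t powr (\<Sum>j\<in>{1..n}. e j) * (\<Prod>j\<in>{1..n}. d j)"
    using \<open>t > 0\<close> by (simp add: prod.distrib powr_sum)
  finally show ?thesis
    using emeasure_coord_box[OF assms(1,3)] by simp
qed

lemma sum_atLeastAtMost_if_le:
  fixes k n :: nat
  assumes "k \<le> n"
  shows "(\<Sum>j\<in>{1..n}. if j \<le> k then a j else 0) = (\<Sum>j=1..k. a j)"
  using assms by (intro sum.mono_neutral_cong_right) auto

lemma nn_integral_le_by_cover:
  assumes [measurable]: "B \<in> sets M" "\<And>m. Q m \<in> sets M"
    and cover: "\<And>x. x \<in> U \<Longrightarrow> (g x \<le> b \<and> x \<in> B) \<or> (\<exists>m. g x \<le> a m \<and> x \<in> Q m)"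
  shows "(\<integral>\<^sup>+x\<in>U. ennreal (g x) \<partial>M) \<le>
    ennreal b * emeasure M B + (\<Sum>m. ennreal (a m) * emeasure M (Q m))"
proof -
  have "ennreal (g x) * indicator U x \<le>
      ennreal b * indicator B x + (\<Sum>m. ennreal (a m) * indicator (Q m) x)" for x
  proof (cases "x \<in> U")
    case True
    with cover consider "g x \<le> b" "x \<in> B" | m where "g x \<le> a m" "x \<in> Q m"
      by blast
    then show ?thesis
    proof cases
      case 1
      with True show ?thesis
        by (simp add: ennreal_leI add_increasing2)
    next
      case 2
      have "ennreal (g x) \<le> ennreal (a m) * indicator (Q m) x"
        using 2 by (simp add: ennreal_leI)
      also have "\<dots> \<le> (\<Sum>m. ennreal (a m) * indicator (Q m) x)"
        using sum_le_suminf[OF summableI, of "{m}" "\<lambda>m. ennreal (a m) * indicator (Q m) x"]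
        by (simp only: sum.insert sum.empty finite.intros empty_iff add_0_right zero_le
            not_False_eq_True)
      finally show ?thesis
        using True by (simp add: add_increasing)
    qed
  qed simp
  then have "(\<integral>\<^sup>+x\<in>U. ennreal (g x) \<partial>M) \<le>
      (\<integral>\<^sup>+x. ennreal b * indicator B x + (\<Sum>m. ennreal (a m) * indicator (Q m) x) \<partial>M)"
    by (rule nn_integral_mono)
  also have "\<dots> = ennreal b * emeasure M B + (\<Sum>m. ennreal (a m) * emeasure M (Q m))"
    by (simp add: nn_integral_add nn_integral_suminf nn_integral_cmult_indicator)
  finally show ?thesis .
qed

lemma nn_integral_eq_infinity_by_disjoint:
  fixes P :: "nat \<Rightarrow> 'a set"
  assumes [measurable]: "\<And>l. P l \<in> sets M" and "disjoint_family P" and "\<And>l. P l \<subseteq> U"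
    and lower: "\<And>l x. x \<in> P l \<Longrightarrow> b l \<le> g x"
    and "c > 0" and mass: "\<And>l. ennreal c \<le> ennreal (b l) * emeasure M (P l)"
  shows "(\<integral>\<^sup>+x\<in>U. ennreal (g x) \<partial>M) = \<infinity>"
proof -
  have pointwise: "(\<Sum>l. ennreal (b l) * indicator (P l) x) \<le> ennreal (g x) * indicator U x" for x
  proof (cases "\<exists>l. x \<in> P l")
    case True
    then obtain l where l: "x \<in> P l" by blast
    with \<open>P l \<subseteq> U\<close> have "x \<in> U" by blast
    with l show ?thesis
      by (simp add: suminf_cmult_indicator[OF \<open>disjoint_family P\<close> l] lower ennreal_leI)
  qed simp
  have "\<infinity> = (\<Sum>l. ennreal c)"
    using \<open>c > 0\<close> summable_iff_suminf_neq_top[of "\<lambda>_. c"] summable_const_iff[of c]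
    by (metis infinity_ennreal_def less_imp_le order_less_irrefl)
  also have "\<dots> \<le> (\<Sum>l. ennreal (b l) * emeasure M (P l))"
    using mass by (intro suminf_le) auto
  also have "\<dots> = (\<integral>\<^sup>+x. (\<Sum>l. ennreal (b l) * indicator (P l) x) \<partial>M)"
    by (simp add: nn_integral_suminf nn_integral_cmult_indicator)
  also have "\<dots> \<le> (\<integral>\<^sup>+x\<in>U. ennreal (g x) \<partial>M)"
    using pointwise by (rule nn_integral_mono)
  finally show ?thesis
    by (simp add: top_unique)
qed

lemma le_powr_inverse_iff:
  fixes t y :: real
  assumes "0 \<le> t" "0 \<le> y" "0 < n"
  shows "y \<le> t powr (1 / real n) \<longleftrightarrow> y ^ n \<le> t"
proof -
  have "(t powr (1 / real n)) ^ n = t"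
    using assms by (cases "t = 0") (auto simp: powr_power powr_powr)
  then show ?thesis
    using power_mono_iff[of y "t powr (1 / real n)" n] assms by simp
qed

lemma powr_inverse_le_iff:
  fixes t y :: real
  assumes "0 \<le> t" "0 \<le> y" "0 < n"
  shows "t powr (1 / real n) \<le> y \<longleftrightarrow> t \<le> y ^ n"
proof -
  have "(t powr (1 / real n)) ^ n = t"
    using assms by (cases "t = 0") (auto simp: powr_power powr_powr)
  then show ?thesis
    using power_mono_iff[of "t powr (1 / real n)" y n] assms by simp
qed

lemma abs_power_pred_le:
  fixes y F :: real
  assumes "0 < F" "0 < m" "\<bar>y\<bar> ^ m \<le> F"
  shows "\<bar>y\<bar> ^ (m - 1) \<le> F * F powr (- 1 / real m)"
proof -
  have "\<bar>y\<bar> ^ (m - 1) \<le> (F powr (1 / real m)) ^ (m - 1)"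
    using assms le_powr_inverse_iff[of F "\<bar>y\<bar>" m] by (intro power_mono) auto
  also have "\<dots> = F powr (1 + (- 1 / real m))"
    using assms by (simp add: powr_power field_simps)
  also have "\<dots> = F * F powr (- 1 / real m)"
    using assms by (subst powr_add) simp
  finally show ?thesis .
qed

lemma ex_dyadic_bracket:
  fixes F :: real
  assumes "0 < F" "F \<le> 1"
  obtains m :: nat where "2 powr (- (real m + 1)) < F" "F \<le> 2 powr (- real m)"
proof
  define m where "m = nat \<lfloor>- log 2 F\<rfloor>"
  have "log 2 F \<le> 0"
    using assms by simp
  then have m: "real m \<le> - log 2 F" "- log 2 F < real m + 1"
    unfolding m_def by linarith+
  have F: "F = 2 powr (log 2 F)"
    using assms by simp
  show "2 powr (- (real m + 1)) < F"
    using m(2) by (subst F) simp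
  show "F \<le> 2 powr (- real m)"
    using m(1) by (subst F) simp
qed

definition log_grad_norm :: "(real^'n \<Rightarrow> real) \<Rightarrow> real^'n \<Rightarrow> real"
  where "log_grad_norm f x = norm (grad f x) / \<bar>f x\<bar>"

lemma log_grad_norm_nonneg: "0 \<le> log_grad_norm f x"
  by (simp add: log_grad_norm_def)

lemma fsum_nonneg: "0 \<le> fsum r k c x"
  unfolding fsum_def by (intro sum_nonneg) (simp add: zero_le_even_power)

lemma abs_power_le_fsum:
  assumes "j \<in> {1..k}"
  shows "\<bar>x $ c j\<bar> ^ (2 * r j) \<le> fsum r k c x"
proof -
  have "\<bar>x $ c j\<bar> ^ (2 * r j) = (x $ c j) ^ (2 * r j)"
    by (simp add: power_even_abs)
  also have "\<dots> \<le> fsum r k c x"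
    unfolding fsum_def by (rule member_le_sum[OF assms]) (auto simp: zero_le_even_power)
  finally show ?thesis .
qed

lemma grad_fsum_component:
  "grad (fsum r k c) x $ i =
    (\<Sum>j=1..k. if c j = i then real (2 * r j) * (x $ c j) ^ (2 * r j - 1) else 0)"
proof -
  have "(\<lambda>t. fsum r k c (x + t *\<^sub>R axis i 1)) =
      (\<lambda>t. \<Sum>j=1..k. (x $ c j + t * (if c j = i then 1 else 0)) ^ (2 * r j))"
    by (auto simp: fsum_def axis_def fun_eq_iff intro!: sum.cong)
  moreover have "((\<lambda>t. \<Sum>j=1..k. (x $ c j + t * (if c j = i then 1 else 0)) ^ (2 * r j))
      has_field_derivative (\<Sum>j=1..k. if c j = i then real (2 * r j) * (x $ c j) ^ (2 * r j - 1) else 0))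
      (at 0)"
    by (auto intro!: derivative_eq_intros sum.cong)
  ultimately show ?thesis
    unfolding grad_def by (simp add: DERIV_imp_deriv)
qed

lemma norm_grad_fsum_le:
  "norm (grad (fsum r k c) x) \<le> (\<Sum>j=1..k. real (2 * r j) * \<bar>x $ c j\<bar> ^ (2 * r j - 1))"
proof -
  have "norm (grad (fsum r k c) x) \<le> (\<Sum>i\<in>UNIV. \<bar>grad (fsum r k c) x $ i\<bar>)"
    by (rule norm_le_l1_cart)
  also have "\<dots> \<le> (\<Sum>i\<in>UNIV. \<Sum>j=1..k.
      if c j = i then real (2 * r j) * \<bar>x $ c j\<bar> ^ (2 * r j - 1) else 0)"
    unfolding grad_fsum_component
    by (intro sum_mono order.trans[OF sum_abs]) (auto simp: abs_mult power_abs)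
  also have "\<dots> = (\<Sum>j=1..k. real (2 * r j) * \<bar>x $ c j\<bar> ^ (2 * r j - 1))"
    by (subst sum.swap) simp
  finally show ?thesis .
qed

lemma grad_fsum_first_component:
  assumes "inj_on c {1..k}" "1 \<le> k"
  shows "grad (fsum r k c) x $ c 1 = real (2 * r 1) * (x $ c 1) ^ (2 * r 1 - 1)"
proof -
  have "j \<in> {1..k} \<Longrightarrow> c j = c 1 \<longleftrightarrow> j = 1" for j
    using assms by (auto dest: inj_onD)
  then have "grad (fsum r k c) x $ c 1 =
      (\<Sum>j=1..k. if j = 1 then real (2 * r j) * (x $ c j) ^ (2 * r j - 1) else 0)"
    unfolding grad_fsum_component by (intro sum.cong) auto
  then show ?thesis
    using assms by simp
qed

lemma log_grad_norm_fsum_le: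
  assumes F: "0 < fsum r k c x" and r: "\<forall>j\<in>{1..k}. 0 < r j"
  shows "log_grad_norm (fsum r k c) x \<le>
    (\<Sum>j=1..k. real (2 * r j) * fsum r k c x powr (- 1 / real (2 * r j)))"
proof -
  let ?F = "fsum r k c x"
  have "norm (grad (fsum r k c) x) \<le> (\<Sum>j=1..k. real (2 * r j) * \<bar>x $ c j\<bar> ^ (2 * r j - 1))"
    by (rule norm_grad_fsum_le)
  also have "\<dots> \<le> (\<Sum>j=1..k. real (2 * r j) * (?F * ?F powr (- 1 / real (2 * r j))))"
  proof (intro sum_mono mult_left_mono)
    fix j assume j: "j \<in> {1..k}"
    show "\<bar>x $ c j\<bar> ^ (2 * r j - 1) \<le> ?F * ?F powr (- 1 / real (2 * r j))"
      using abs_power_pred_le[OF F _ abs_power_le_fsum[OF j]] r j by simp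
  qed simp
  also have "\<dots> = ?F * (\<Sum>j=1..k. real (2 * r j) * ?F powr (- 1 / real (2 * r j)))"
    by (simp add: sum_distrib_left algebra_simps)
  finally show ?thesis
    using F by (simp add: log_grad_norm_def field_simps)
qed

lemma log_grad_norm_fsum_le_const:
  assumes "1 \<le> fsum r k c x" and "\<forall>j\<in>{1..k}. 0 < r j"
  shows "log_grad_norm (fsum r k c) x \<le> (\<Sum>j=1..k. real (2 * r j))"
proof -
  have "fsum r k c x powr (- 1 / real (2 * r j)) \<le> 1" for j
    using assms(1) powr_mono[of "- 1 / real (2 * r j)" 0 "fsum r k c x"] by simp
  then have "(\<Sum>j=1..k. real (2 * r j) * fsum r k c x powr (- 1 / real (2 * r j))) \<le>
      (\<Sum>j=1..k. real (2 * r j))"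
    by (intro sum_mono mult_left_le) auto
  with log_grad_norm_fsum_le[of r k c x] assms show ?thesis
    by simp
qed

lemma log_grad_norm_fsum_le_small:
  assumes "0 < t" "t \<le> fsum r k c x" "fsum r k c x \<le> 1"
    and r: "\<forall>j\<in>{1..k}. 0 < r j" and rmin: "\<forall>j\<in>{1..k}. r 1 \<le> r j"
  shows "log_grad_norm (fsum r k c) x \<le> (\<Sum>j=1..k. real (2 * r j)) * t powr (- 1 / real (2 * r 1))"
proof -
  let ?F = "fsum r k c x"
  have "?F powr (- 1 / real (2 * r j)) \<le> t powr (- 1 / real (2 * r 1))" if "j \<in> {1..k}" for j
  proof -
    have "?F powr (- 1 / real (2 * r j)) \<le> ?F powr (- 1 / real (2 * r 1))"
      using assms that by (intro powr_mono') (auto simp: field_simps)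
    also have "\<dots> \<le> t powr (- 1 / real (2 * r 1))"
      using assms that by (intro powr_mono2') auto
    finally show ?thesis .
  qed
  then have "(\<Sum>j=1..k. real (2 * r j) * ?F powr (- 1 / real (2 * r j))) \<le>
      (\<Sum>j=1..k. real (2 * r j) * t powr (- 1 / real (2 * r 1)))"
    by (intro sum_mono mult_left_mono) auto
  with log_grad_norm_fsum_le[of r k c x] assms show ?thesis
    by (simp add: sum_distrib_right)
qed

lemma abs_coord_le_of_fsum_le:
  assumes "fsum r k c x \<le> t" "j \<in> {1..k}" "0 < r j"
  shows "\<bar>x $ c j\<bar> \<le> t powr (1 / real (2 * r j))"
  using assms abs_power_le_fsum[of j k x c r] fsum_nonneg[of r k c x]
  by (subst le_powr_inverse_iff) auto

lemma fsum_le_of_abs_coord_le: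
  assumes "0 \<le> t" and "\<forall>j\<in>{1..k}. 0 < r j \<and> \<bar>x $ c j\<bar> \<le> t powr (1 / real (2 * r j))"
  shows "fsum r k c x \<le> real k * t"
proof -
  have "(x $ c j) ^ (2 * r j) \<le> t" if "j \<in> {1..k}" for j
    using assms that le_powr_inverse_iff[of t "\<bar>x $ c j\<bar>" "2 * r j"]
    by (simp add: power_even_abs)
  then have "fsum r k c x \<le> (\<Sum>j=1..k. t)"
    unfolding fsum_def by (intro sum_mono) auto
  then show ?thesis
    by simp
qed

lemma log_grad_norm_fsum_ge:
  assumes "inj_on c {1..k}" "1 \<le> k" "0 < r 1" "0 < t"
    and lo: "(t / 2) powr (1 / real (2 * r 1)) \<le> x $ c 1"
    and hi: "x $ c 1 \<le> t powr (1 / real (2 * r 1))"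
    and F: "fsum r k c x \<le> real k * t"
  shows "real (r 1) / real k * t powr (- 1 / real (2 * r 1)) \<le> log_grad_norm (fsum r k c) x"
proof -
  define y where "y = x $ c 1"
  define a where "a = 1 / real (2 * r 1)"
  have "0 < (t / 2) powr (1 / real (2 * r 1))"
    using assms(4) by simp
  with lo have y: "0 < y"
    unfolding y_def by linarith
  have "t / 2 \<le> y ^ (2 * r 1)"
    using lo y assms(3,4) powr_inverse_le_iff[of "t / 2" y "2 * r 1"] unfolding y_def by simp
  then have F_pos: "0 < fsum r k c x"
    using abs_power_le_fsum[of 1 k x c r] assms(2,4) y unfolding y_def by simp
  have "y ^ (2 * r 1) = y * y ^ (2 * r 1 - 1)"
    using assms(3) by (simp flip: power_Suc)
  also have "\<dots> \<le> t powr a * y ^ (2 * r 1 - 1)"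
    using hi y unfolding y_def a_def by (intro mult_right_mono) auto
  finally have "(t / 2) / t powr a \<le> y ^ (2 * r 1 - 1)"
    using \<open>t / 2 \<le> y ^ (2 * r 1)\<close> assms(4) by (simp add: divide_le_eq mult.commute)
  have grad: "real (2 * r 1) * y ^ (2 * r 1 - 1) \<le> norm (grad (fsum r k c) x)"
    using component_le_norm_cart[of "grad (fsum r k c) x" "c 1"] y
      grad_fsum_first_component[OF assms(1,2)] unfolding y_def by simp
  have "real (r 1) / real k * t powr (- a) = real (2 * r 1) * ((t / 2) / t powr a) / (real k * t)"
    using assms(2,4) by (simp add: powr_minus field_simps)
  also have "\<dots> \<le> real (2 * r 1) * y ^ (2 * r 1 - 1) / (real k * t)"
    using \<open>(t / 2) / t powr a \<le> _\<close> assms(2,4) by (intro divide_right_mono mult_left_mono) auto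
  also have "\<dots> \<le> log_grad_norm (fsum r k c) x"
    unfolding log_grad_norm_def using grad F F_pos assms(2,4) by (intro frac_le) auto
  finally show ?thesis
    unfolding a_def by simp
qed

lemma log_grad_norm_fsum_dyadic_bound:
  assumes "0 < fsum r k c x" "fsum r k c x \<le> 1"
    and "\<forall>j\<in>{1..k}. 0 < r j" "\<forall>j\<in>{1..k}. r 1 \<le> r j"
  obtains m :: nat
  where "log_grad_norm (fsum r k c) x \<le>
      (\<Sum>j=1..k. real (2 * r j)) * 2 powr ((real m + 1) / real (2 * r 1))"
    and "fsum r k c x \<le> 2 powr (- real m)"
proof -
  obtain m :: nat where m: "2 powr (- (real m + 1)) < fsum r k c x" "fsum r k c x \<le> 2 powr (- real m)"
    using ex_dyadic_bracket assms(1,2) by blast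
  have "(2 powr (- (real m + 1))) powr (- 1 / real (2 * r 1)) = 2 powr ((real m + 1) / real (2 * r 1))"
    unfolding powr_powr by (rule arg_cong[where f = "(powr) 2"]) (simp add: divide_simps)
  with log_grad_norm_fsum_le_small[of "2 powr (- (real m + 1))" r k c x] m assms
  show thesis
    by (intro that[of m]) auto
qed

definition anisotropic_box ::
    "(nat \<Rightarrow> nat) \<Rightarrow> nat \<Rightarrow> (nat \<Rightarrow> 'n::finite) \<Rightarrow> nat \<Rightarrow> real \<Rightarrow> real \<Rightarrow> (real^'n) set"
  where "anisotropic_box r k c n A t = coord_box c n
    (\<lambda>j. if j \<le> k then - (t powr (1 / real (2 * r j))) else - A)
    (\<lambda>j. if j \<le> k then t powr (1 / real (2 * r j)) else A)"

lemma mem_anisotropic_box_of_fsum_le: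
  assumes "fsum r k c x \<le> t" "\<forall>j\<in>{1..k}. 0 < r j" "\<And>i. \<bar>x $ i\<bar> \<le> A"
  shows "x \<in> anisotropic_box r k c n A t"
  unfolding anisotropic_box_def coord_box_def
proof (intro CollectI ballI)
  fix j assume j: "j \<in> {1..n}"
  have "j \<le> k \<Longrightarrow> \<bar>x $ c j\<bar> \<le> t powr (1 / real (2 * r j))"
    using j assms(2) abs_coord_le_of_fsum_le[OF assms(1)] by simp
  with assms(3)[of "c j"] show "(if j \<le> k then - (t powr (1 / real (2 * r j))) else - A) \<le> x $ c j \<and>
      x $ c j \<le> (if j \<le> k then t powr (1 / real (2 * r j)) else A)"
    by (auto simp: abs_le_iff)
qed

lemma emeasure_anisotropic_box:
  assumes "bij_betw c {1..n} UNIV" "k \<le> n" "0 < t" "0 \<le> A"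
  shows "emeasure lborel (anisotropic_box r k c n A t) =
    ennreal (t powr (\<Sum>j=1..k. 1 / real (2 * r j)) * (\<Prod>j\<in>{1..n}. if j \<le> k then 2 else 2 * A))"
proof -
  have "emeasure lborel (anisotropic_box r k c n A t) = ennreal
      (t powr (\<Sum>j\<in>{1..n}. if j \<le> k then 1 / real (2 * r j) else 0) *
       (\<Prod>j\<in>{1..n}. if j \<le> k then 2 else 2 * A))"
    unfolding anisotropic_box_def using assms
    by (intro emeasure_coord_box_scaled) auto
  then show ?thesis
    by (simp only: sum_atLeastAtMost_if_le[OF \<open>k \<le> n\<close>])
qed

lemma suminf_anisotropic_boxes_finite:
  assumes "bij_betw c {1..n} UNIV" "k \<le> n" "0 \<le> A" "0 \<le> b"
    and "s < (\<Sum>j=1..k. 1 / real (2 * r j))"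
  shows "(\<Sum>m. ennreal (b * 2 powr ((real m + 1) * s)) *
    emeasure lborel (anisotropic_box r k c n A (2 powr - real m))) < \<infinity>"
proof -
  define \<sigma> where "\<sigma> = (\<Sum>j=1..k. 1 / real (2 * r j))"
  define D where "D = (\<Prod>j\<in>{1..n}. if j \<le> k then 2 else 2 * A)"
  define q where "q = 2 powr (s - \<sigma>)"
  have "D \<ge> 0"
    unfolding D_def using assms(3) by (intro prod_nonneg) auto
  have "q < 2 powr 0"
    using assms(5) unfolding q_def \<sigma>_def by (intro powr_less_mono) auto
  then have q: "0 < q" "q < 1"
    unfolding q_def by auto
  have summand: "ennreal (b * 2 powr ((real m + 1) * s)) *
      emeasure lborel (anisotropic_box r k c n A (2 powr - real m)) =
      ennreal (b * 2 powr s * D * q ^ m)" for m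
  proof -
    have "b * 2 powr ((real m + 1) * s) * ((2 powr - real m) powr \<sigma> * D) =
        b * D * (2 powr ((real m + 1) * s) * (2 powr - real m) powr \<sigma>)"
      by (simp add: algebra_simps)
    also have "2 powr ((real m + 1) * s) * (2 powr - real m) powr \<sigma> = 2 powr s * q ^ m"
      by (simp add: q_def powr_powr powr_power flip: powr_add) (simp add: algebra_simps)
    also have "b * D * (2 powr s * q ^ m) = b * 2 powr s * D * q ^ m"
      by (simp add: algebra_simps)
    finally have real_eq: "b * 2 powr ((real m + 1) * s) * ((2 powr - real m) powr \<sigma> * D) =
        b * 2 powr s * D * q ^ m" .
    have "emeasure lborel (anisotropic_box r k c n A (2 powr - real m)) =
        ennreal ((2 powr - real m) powr \<sigma> * D)"
      unfolding \<sigma>_def D_def using assms(1-3) by (intro emeasure_anisotropic_box) auto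
    also have "ennreal (b * 2 powr ((real m + 1) * s)) * \<dots> =
        ennreal (b * 2 powr ((real m + 1) * s) * ((2 powr - real m) powr \<sigma> * D))"
      using assms(4) \<open>D \<ge> 0\<close> by (intro ennreal_mult[symmetric]) auto
    finally show ?thesis
      unfolding real_eq .
  qed
  have "(\<Sum>m. ennreal (b * 2 powr s * D * q ^ m)) = ennreal (\<Sum>m. b * 2 powr s * D * q ^ m)"
    using q \<open>D \<ge> 0\<close> assms(4)
    by (intro suminf_ennreal2 summable_mult summable_geometric) auto
  then show ?thesis
    unfolding summand by simp
qed

lemma log_grad_norm_fsum_dyadic_cover:
  assumes coord: "\<And>i. \<bar>x $ i\<bar> \<le> A" and "0 \<le> \<gamma>"
    and r: "\<forall>j\<in>{1..k}. 0 < r j" and rmin: "\<forall>j\<in>{1..k}. r 1 \<le> r j"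
  defines "K \<equiv> \<Sum>j=1..k. real (2 * r j)"
  shows "(log_grad_norm (fsum r k c) x powr \<gamma> \<le> K powr \<gamma> \<and>
      x \<in> coord_box c n (\<lambda>_. - A) (\<lambda>_. A)) \<or>
    (\<exists>m::nat. log_grad_norm (fsum r k c) x powr \<gamma> \<le>
        K powr \<gamma> * 2 powr ((real m + 1) * (\<gamma> / real (2 * r 1))) \<and>
      x \<in> anisotropic_box r k c n A (2 powr - real m))"
proof -
  have "- A \<le> x $ i \<and> x $ i \<le> A" for i
    using coord[of i] by linarith
  then have cube: "x \<in> coord_box c n (\<lambda>_. - A) (\<lambda>_. A)"
    by (simp add: coord_box_def)
  consider "fsum r k c x = 0" | "1 \<le> fsum r k c x" | "0 < fsum r k c x" "fsum r k c x \<le> 1"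
    using fsum_nonneg[of r k c x] by linarith
  then show ?thesis
  proof cases
    case 1
    with cube show ?thesis
      by (simp add: log_grad_norm_def)
  next
    case 2
    then have "log_grad_norm (fsum r k c) x powr \<gamma> \<le> K powr \<gamma>"
      unfolding K_def using log_grad_norm_fsum_le_const[OF _ r] log_grad_norm_nonneg \<open>0 \<le> \<gamma>\<close>
      by (intro powr_mono2) auto
    with cube show ?thesis
      by blast
  next
    case 3
    then obtain m where m: "log_grad_norm (fsum r k c) x \<le> K * 2 powr ((real m + 1) / real (2 * r 1))"
      "fsum r k c x \<le> 2 powr - real m"
      using log_grad_norm_fsum_dyadic_bound r rmin unfolding K_def by metis
    have "log_grad_norm (fsum r k c) x powr \<gamma> \<le> (K * 2 powr ((real m + 1) / real (2 * r 1))) powr \<gamma>"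
      using m(1) log_grad_norm_nonneg \<open>0 \<le> \<gamma>\<close> by (intro powr_mono2) auto
    also have "\<dots> = K powr \<gamma> * 2 powr ((real m + 1) * (\<gamma> / real (2 * r 1)))"
      unfolding K_def by (simp add: powr_mult powr_powr)
    finally show ?thesis
      using mem_anisotropic_box_of_fsum_le[OF m(2) r coord] by blast
  qed
qed

lemma integral_log_grad_norm_fsum_finite:
  fixes c :: "nat \<Rightarrow> 'n::finite" and U :: "(real^'n) set"
  assumes bij: "bij_betw c {1..n} UNIV" and "k \<le> n"
    and r: "\<forall>j\<in>{1..k}. 0 < r j" and rmin: "\<forall>j\<in>{1..k}. r 1 \<le> r j"
    and "bounded U" and "0 \<le> \<gamma>"
    and lt: "\<gamma> / real (2 * r 1) < (\<Sum>j=1..k. 1 / real (2 * r j))"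
  shows "(\<integral>\<^sup>+x\<in>U. ennreal (log_grad_norm (fsum r k c) x powr \<gamma>) \<partial>lborel) < \<infinity>"
proof -
  obtain A where A: "A > 0" "\<forall>x\<in>U. norm x \<le> A"
    using \<open>bounded U\<close> bounded_pos by blast
  define K where "K = (\<Sum>j=1..k. real (2 * r j))"
  have "\<bar>x $ i\<bar> \<le> A" if "x \<in> U" for x i
    using A that component_le_norm_cart[of x i] by force
  note cover = log_grad_norm_fsum_dyadic_cover[OF this \<open>0 \<le> \<gamma>\<close> r rmin, folded K_def]
  have "(\<integral>\<^sup>+x\<in>U. ennreal (log_grad_norm (fsum r k c) x powr \<gamma>) \<partial>lborel) \<le>
      ennreal (K powr \<gamma>) * emeasure lborel (coord_box c n (\<lambda>_. - A) (\<lambda>_. A)) +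
      (\<Sum>m. ennreal (K powr \<gamma> * 2 powr ((real m + 1) * (\<gamma> / real (2 * r 1)))) *
        emeasure lborel (anisotropic_box r k c n A (2 powr - real m)))"
    by (rule nn_integral_le_by_cover[OF _ _ cover]) (simp_all add: anisotropic_box_def)
  also have "\<dots> < \<infinity>"
    using emeasure_coord_box[OF bij, of "\<lambda>_. - A" "\<lambda>_. A"] A(1)
      suminf_anisotropic_boxes_finite[OF bij \<open>k \<le> n\<close> _ _ lt, of A "K powr \<gamma>"]
    by (simp add: ennreal_mult_less_top)
  finally show ?thesis .
qed

definition shell_box ::
    "(nat \<Rightarrow> nat) \<Rightarrow> nat \<Rightarrow> (nat \<Rightarrow> 'n::finite) \<Rightarrow> nat \<Rightarrow> real \<Rightarrow> real \<Rightarrow> (real^'n) set"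
  where "shell_box r k c n e t = coord_box c n
    (\<lambda>j. if j = 1 then (t / 2) powr (1 / real (2 * r 1))
      else if j \<le> k then - ((t / 2) powr (1 / real (2 * r j))) else - e)
    (\<lambda>j. if j = 1 then t powr (1 / real (2 * r 1))
      else if j \<le> k then (t / 2) powr (1 / real (2 * r j)) else e)"

lemma emeasure_shell_box:
  assumes "bij_betw c {1..n} UNIV" "1 \<le> k" "k \<le> n" "\<forall>j\<in>{1..k}. 0 < r j" "0 < e"
  obtains D where "D > 0"
    and "\<And>t. t > 0 \<Longrightarrow>
      emeasure lborel (shell_box r k c n e t) = ennreal (t powr (\<Sum>j=1..k. 1 / real (2 * r j)) * D)"
proof
  define d where "d j = (if j = 1 then 1 - (1 / 2) powr (1 / real (2 * r 1))
    else if j \<le> k then 2 * (1 / 2) powr (1 / real (2 * r j)) else 2 * e)" for j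
  have "(1 / 2 :: real) powr (1 / real (2 * r 1)) < 1"
    using powr_less_mono2[of "1 / real (2 * r 1)" "1 / 2" 1] assms(2,4) by simp
  then have "d j > 0" for j
    unfolding d_def using assms(5) by auto
  then show "(\<Prod>j\<in>{1..n}. d j) > 0"
    by (intro prod_pos) auto
  fix t :: real assume "t > 0"
  have "emeasure lborel (shell_box r k c n e t) = ennreal
      (t powr (\<Sum>j\<in>{1..n}. if j \<le> k then 1 / real (2 * r j) else 0) * (\<Prod>j\<in>{1..n}. d j))"
    unfolding shell_box_def
  proof (rule emeasure_coord_box_scaled[OF assms(1) \<open>t > 0\<close>])
    fix j assume "j \<in> {1..n}"
    show "(if j = 1 then (t / 2) powr (1 / real (2 * r 1))
          else if j \<le> k then - ((t / 2) powr (1 / real (2 * r j))) else - e) \<le>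
        (if j = 1 then t powr (1 / real (2 * r 1))
          else if j \<le> k then (t / 2) powr (1 / real (2 * r j)) else e)"
      using \<open>t > 0\<close> assms(5) by (auto intro: powr_mono2)
    show "(if j = 1 then t powr (1 / real (2 * r 1))
          else if j \<le> k then (t / 2) powr (1 / real (2 * r j)) else e) -
        (if j = 1 then (t / 2) powr (1 / real (2 * r 1))
          else if j \<le> k then - ((t / 2) powr (1 / real (2 * r j))) else - e) =
        t powr (if j \<le> k then 1 / real (2 * r j) else 0) * d j"
      using \<open>t > 0\<close> assms(2) by (auto simp: d_def powr_mult[symmetric] algebra_simps)
  qed
  then show "emeasure lborel (shell_box r k c n e t) =
      ennreal (t powr (\<Sum>j=1..k. 1 / real (2 * r j)) * (\<Prod>j\<in>{1..n}. d j))"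
    by (simp only: sum_atLeastAtMost_if_le[OF \<open>k \<le> n\<close>])
qed

lemma shell_box_coords:
  assumes "x \<in> shell_box r k c n e t" "1 \<le> k" "k \<le> n" "0 < t"
  shows "(t / 2) powr (1 / real (2 * r 1)) \<le> x $ c 1" "x $ c 1 \<le> t powr (1 / real (2 * r 1))"
    and "\<And>j. j \<in> {1..k} \<Longrightarrow> \<bar>x $ c j\<bar> \<le> t powr (1 / real (2 * r j))"
    and "\<And>j. j \<in> {k<..n} \<Longrightarrow> \<bar>x $ c j\<bar> \<le> e"
proof -
  have box: "j \<in> {1..n} \<Longrightarrow>
      (if j = 1 then (t / 2) powr (1 / real (2 * r 1))
        else if j \<le> k then - ((t / 2) powr (1 / real (2 * r j))) else - e) \<le> x $ c j \<and>
      x $ c j \<le> (if j = 1 then t powr (1 / real (2 * r 1))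
        else if j \<le> k then (t / 2) powr (1 / real (2 * r j)) else e)" for j
    using assms(1) unfolding shell_box_def coord_box_def by blast
  show lo: "(t / 2) powr (1 / real (2 * r 1)) \<le> x $ c 1" and hi: "x $ c 1 \<le> t powr (1 / real (2 * r 1))"
    using box[of 1] assms(2,3) by auto
  show "\<bar>x $ c j\<bar> \<le> e" if "j \<in> {k<..n}" for j
    using box[of j] that assms(2) by auto
  fix j assume j: "j \<in> {1..k}"
  show "\<bar>x $ c j\<bar> \<le> t powr (1 / real (2 * r j))"
  proof (cases "j = 1")
    case True
    have "0 \<le> x $ c 1"
      using lo powr_ge_zero[of "t / 2" "1 / real (2 * r 1)"] by linarith
    with hi True show ?thesis
      by simp
  next
    case False
    then have "\<bar>x $ c j\<bar> \<le> (t / 2) powr (1 / real (2 * r j))"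
      using box[of j] j assms(3) by auto
    also have "\<dots> \<le> t powr (1 / real (2 * r j))"
      using assms(4) by (intro powr_mono2) auto
    finally show ?thesis .
  qed
qed

lemma log_grad_norm_fsum_ge_on_shell_box:
  assumes "x \<in> shell_box r k c n e t" "inj_on c {1..k}" "1 \<le> k" "k \<le> n"
    and "\<forall>j\<in>{1..k}. 0 < r j" "0 < t"
  shows "real (r 1) / real k * t powr (- 1 / real (2 * r 1)) \<le> log_grad_norm (fsum r k c) x"
proof (rule log_grad_norm_fsum_ge)
  show "fsum r k c x \<le> real k * t"
    using assms shell_box_coords(3)[OF assms(1,3,4,6)] by (intro fsum_le_of_abs_coord_le) auto
qed (use assms shell_box_coords[OF assms(1,3,4,6)] in auto)

lemma shell_boxes_disjoint:
  assumes "1 \<le> k" "k \<le> n" "0 < r 1" "0 < t'" "t' < t / 2"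
  shows "shell_box r k c n e t \<inter> shell_box r k c n e t' = {}"
proof -
  have "t' powr (1 / real (2 * r 1)) < (t / 2) powr (1 / real (2 * r 1))"
    using assms by (intro powr_less_mono2) auto
  then show ?thesis
    using shell_box_coords(1)[of _ r k c n e t] shell_box_coords(2)[of _ r k c n e t'] assms by force
qed

lemma shell_box_subset_cube:
  assumes "bij_betw c {1..n} UNIV" "1 \<le> k" "k \<le> n"
    and r: "\<forall>j\<in>{1..k}. 0 < r j \<and> r j \<le> r k"
    and e: "0 < e" "e \<le> 1" and t: "0 < t" "t \<le> e ^ (2 * r k)"
  shows "shell_box r k c n e t \<subseteq> {x. \<forall>i. \<bar>x $ i\<bar> \<le> e}"
proof safe
  fix x i assume x: "x \<in> shell_box r k c n e t"
  obtain j where j: "j \<in> {1..n}" "i = c j"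
    using assms(1) by (metis UNIV_I bij_betw_iff_bijections)
  show "\<bar>x $ i\<bar> \<le> e"
  proof (cases "j \<le> k")
    case True
    with j r have "0 < r j"
      by auto
    from True j have "\<bar>x $ c j\<bar> \<le> t powr (1 / real (2 * r j))"
      using shell_box_coords(3)[OF x assms(2,3) t(1)] by simp
    also have "\<dots> \<le> (e ^ (2 * r j)) powr (1 / real (2 * r j))"
      using t e r True j(1) by (intro powr_mono2 order.trans[OF t(2)] power_decreasing) auto
    also have "\<dots> = e"
      using e \<open>0 < r j\<close> by (simp add: powr_realpow[symmetric] powr_powr)
    finally show ?thesis
      using j by simp
  next
    case False
    then show ?thesis
      using shell_box_coords(4)[OF x assms(2,3) t(1)] j by simp
  qed
qed

lemma ex_cube_subset:
  fixes U :: "(real^'n) set"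
  assumes "open U" "0 \<in> U"
  obtains e where "0 < e" "e \<le> 1" "{x. \<forall>i. \<bar>x $ i\<bar> \<le> e} \<subseteq> U"
proof -
  obtain \<delta> where \<delta>: "\<delta> > 0" "ball 0 \<delta> \<subseteq> U"
    using assms open_contains_ball by blast
  define e where "e = min 1 (\<delta> / (2 * real CARD('n)))"
  have e: "0 < e" "e \<le> 1" "real CARD('n) * e < \<delta>"
    using \<delta>(1) by (auto simp: e_def field_simps min_def)
  have "x \<in> U" if "\<forall>i. \<bar>x $ i\<bar> \<le> e" for x :: "real^'n"
  proof -
    have "norm x \<le> (\<Sum>i\<in>UNIV. \<bar>x $ i\<bar>)"
      by (rule norm_le_l1_cart)
    also have "\<dots> \<le> real CARD('n) * e"
      using sum_mono[of UNIV "\<lambda>i. \<bar>x $ i\<bar>" "\<lambda>_. e"] that by simp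
    finally show ?thesis
      using e \<delta>(2) by auto
  qed
  with e show thesis
    using that by blast
qed

lemma disjoint_family_shell_boxes:
  assumes "1 \<le> k" "k \<le> n" "0 < r 1" "0 < \<epsilon>"
  shows "disjoint_family (\<lambda>l::nat. shell_box r k c n e (\<epsilon> * (1 / 4) ^ l))"
proof -
  have disj: "shell_box r k c n e (\<epsilon> * (1 / 4) ^ l) \<inter> shell_box r k c n e (\<epsilon> * (1 / 4) ^ l') = {}"
    if "l < l'" for l l' :: nat
  proof (rule shell_boxes_disjoint)
    have "(1 / 4 :: real) ^ l' \<le> (1 / 4) ^ Suc l"
      using that by (intro power_decreasing) auto
    then have "\<epsilon> * (1 / 4) ^ l' \<le> \<epsilon> * (1 / 4) ^ l / 4"
      using assms(4) by simp
    moreover have "0 < \<epsilon> * (1 / 4 :: real) ^ l'"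
      using assms(4) by simp
    ultimately show "\<epsilon> * (1 / 4) ^ l' < \<epsilon> * (1 / 4) ^ l / 2"
      by linarith
  qed (use assms in auto)
  show ?thesis
    unfolding disjoint_family_on_def
  proof (intro ballI impI)
    fix l l' :: nat assume "l \<noteq> l'"
    then show "shell_box r k c n e (\<epsilon> * (1 / 4) ^ l) \<inter> shell_box r k c n e (\<epsilon> * (1 / 4) ^ l') = {}"
      using disj[of l l'] disj[of l' l] by (cases "l < l'") auto
  qed
qed

lemma powr_scaling_mass_ge:
  fixes t \<kappa> D \<sigma> a \<gamma> :: real
  assumes "0 < t" "t \<le> 1" "0 < \<kappa>" "0 \<le> D" "\<sigma> \<le> \<gamma> * a"
  shows "\<kappa> powr \<gamma> * D \<le> (\<kappa> * t powr (- a)) powr \<gamma> * (t powr \<sigma> * D)"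
proof -
  have "1 \<le> t powr (\<sigma> - \<gamma> * a)"
    using powr_mono'[of "\<sigma> - \<gamma> * a" 0 t] assms by simp
  then have "\<kappa> powr \<gamma> * D \<le> \<kappa> powr \<gamma> * D * t powr (\<sigma> - \<gamma> * a)"
    using assms mult_left_mono[of 1 "t powr (\<sigma> - \<gamma> * a)" "\<kappa> powr \<gamma> * D"] by simp
  also have "t powr (\<sigma> - \<gamma> * a) = (t powr (- a)) powr \<gamma> * t powr \<sigma>"
    by (simp add: powr_powr flip: powr_add) (simp add: algebra_simps)
  also have "\<kappa> powr \<gamma> * D * ((t powr (- a)) powr \<gamma> * t powr \<sigma>) =
      \<kappa> powr \<gamma> * (t powr (- a)) powr \<gamma> * (t powr \<sigma> * D)"
    by (simp add: algebra_simps)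
  also have "\<dots> = (\<kappa> * t powr (- a)) powr \<gamma> * (t powr \<sigma> * D)"
    using assms by (simp add: powr_mult)
  finally show ?thesis .
qed

lemma integral_log_grad_norm_fsum_infinite:
  fixes c :: "nat \<Rightarrow> 'n::finite" and U :: "(real^'n) set"
  assumes bij: "bij_betw c {1..n} UNIV" and k: "1 \<le> k" "k \<le> n"
    and r: "\<forall>j\<in>{1..k}. 0 < r j" and rmax: "\<forall>j\<in>{1..k}. r j \<le> r k"
    and "open U" "0 \<in> U" "0 \<le> \<gamma>"
    and ge: "(\<Sum>j=1..k. 1 / real (2 * r j)) \<le> \<gamma> / real (2 * r 1)"
  shows "(\<integral>\<^sup>+x\<in>U. ennreal (log_grad_norm (fsum r k c) x powr \<gamma>) \<partial>lborel) = \<infinity>"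
proof -
  obtain e where e: "0 < e" "e \<le> 1" "{x. \<forall>i. \<bar>x $ i\<bar> \<le> e} \<subseteq> U"
    using ex_cube_subset \<open>open U\<close> \<open>0 \<in> U\<close> by blast
  obtain D where D: "D > 0" "\<And>t. t > 0 \<Longrightarrow>
      emeasure lborel (shell_box r k c n e t) = ennreal (t powr (\<Sum>j=1..k. 1 / real (2 * r j)) * D)"
    using emeasure_shell_box[OF bij k r e(1)] by blast
  define \<epsilon> where "\<epsilon> = e ^ (2 * r k)"
  define t where "t l = \<epsilon> * (1 / 4) ^ l" for l :: nat
  define \<kappa> where "\<kappa> = real (r 1) / real k"
  define a where "a = 1 / real (2 * r 1)"
  have "0 < \<epsilon>" "\<epsilon> \<le> 1"
    using e by (simp_all add: \<epsilon>_def power_le_one)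
  then have t: "0 < t l" "t l \<le> \<epsilon>" "t l \<le> 1" for l
    unfolding t_def by (auto intro: mult_left_le order_trans[OF mult_left_le] simp: power_le_one)
  have "\<kappa> > 0"
    unfolding \<kappa>_def using r k by simp
  have inj: "inj_on c {1..k}"
    using k by (intro inj_on_subset[OF bij_betw_imp_inj_on[OF bij]]) auto
  show ?thesis
  proof (rule nn_integral_eq_infinity_by_disjoint[where b = "\<lambda>l. (\<kappa> * t l powr (- a)) powr \<gamma>"])
    show "shell_box r k c n e (t l) \<in> sets lborel" for l
      by (simp add: shell_box_def)
    show "disjoint_family (\<lambda>l. shell_box r k c n e (t l))"
      unfolding t_def by (rule disjoint_family_shell_boxes) (use k r \<open>0 < \<epsilon>\<close> in auto)
    show "shell_box r k c n e (t l) \<subseteq> U" for l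
      using shell_box_subset_cube[where r = r and t = "t l", OF bij k _ e(1,2) t(1)] t(2)
        r rmax e(3) unfolding \<epsilon>_def by blast
    show "(\<kappa> * t l powr (- a)) powr \<gamma> \<le> log_grad_norm (fsum r k c) x powr \<gamma>"
      if "x \<in> shell_box r k c n e (t l)" for l x
      using log_grad_norm_fsum_ge_on_shell_box[OF that inj k r t(1)] \<open>\<kappa> > 0\<close> \<open>0 \<le> \<gamma>\<close>
      by (intro powr_mono2) (auto simp: \<kappa>_def a_def)
    show "0 < \<kappa> powr \<gamma> * D"
      using \<open>\<kappa> > 0\<close> D(1) by simp
    fix l
    have "\<kappa> powr \<gamma> * D \<le>
        (\<kappa> * t l powr (- a)) powr \<gamma> * (t l powr (\<Sum>j=1..k. 1 / real (2 * r j)) * D)"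
      using t[of l] \<open>\<kappa> > 0\<close> D(1) ge by (intro powr_scaling_mass_ge) (auto simp: a_def)
    then have "ennreal (\<kappa> powr \<gamma> * D) \<le>
        ennreal ((\<kappa> * t l powr (- a)) powr \<gamma> * (t l powr (\<Sum>j=1..k. 1 / real (2 * r j)) * D))"
      by (rule ennreal_leI)
    also have "\<dots> = ennreal ((\<kappa> * t l powr (- a)) powr \<gamma>) * emeasure lborel (shell_box r k c n e (t l))"
      using D t(1) by (simp add: ennreal_mult)
    finally show "ennreal (\<kappa> powr \<gamma> * D) \<le>
        ennreal ((\<kappa> * t l powr (- a)) powr \<gamma>) * emeasure lborel (shell_box r k c n e (t l))" .
  qed
qed

lemma exponent_threshold_iff:
  fixes k :: nat and \<gamma> :: real
  assumes "1 \<le> k" and r: "\<forall>j\<in>{1..k}. 0 < r j"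
  shows "\<gamma> / real (2 * r 1) < (\<Sum>j=1..k. 1 / real (2 * r j)) \<longleftrightarrow>
    \<gamma> < 1 + (\<Sum>j=2..k. real (r 1) / real (r j))"
proof -
  have "r 1 > 0"
    using assms by auto
  have "(\<Sum>j=1..k. real (r 1) / real (r j)) = real (2 * r 1) * (\<Sum>j=1..k. 1 / real (2 * r j))"
    unfolding sum_distrib_left using r by (intro sum.cong) auto
  moreover have "(\<Sum>j=1..k. real (r 1) / real (r j)) = 1 + (\<Sum>j=2..k. real (r 1) / real (r j))"
    using assms(1) \<open>r 1 > 0\<close> by (simp add: sum.atLeast_Suc_atMost numeral_2_eq_2)
  ultimately show ?thesis
    using \<open>r 1 > 0\<close> by (simp add: divide_less_eq mult.commute)
qed

theorem mainTheorem11: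
  fixes r :: "nat \<Rightarrow> nat" and k n :: nat and c :: "nat \<Rightarrow> 'n::finite"
    and U :: "(real^'n) set" and \<gamma> :: real
  assumes "n = CARD('n)" and "n \<ge> 2" and "1 \<le> k" and "k \<le> n"
    and "bij_betw c {1..n} UNIV"
    and "\<forall>i\<in>{1..k}. 0 < r i"
    and "\<forall>i j. 1 \<le> i \<longrightarrow> i \<le> j \<longrightarrow> j \<le> k \<longrightarrow> r i \<le> r j"
    and "open U" and "bounded U" and "0 \<in> U" and "\<gamma> > 0"
  shows "(2 \<le> k \<longrightarrow>
           ((\<integral>\<^sup>+ x\<in>U. ennreal ((norm (grad (fsum r k c) x) / \<bar>fsum r k c x\<bar>) powr \<gamma>) \<partial>lborel) < \<infinity>
             \<longleftrightarrow> \<gamma> < 1 + (\<Sum>i=2..k. real (r 1) / real (r i))))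
       \<and> (k = 1 \<longrightarrow>
           ((\<integral>\<^sup>+ x\<in>U. ennreal ((norm (grad (fsum r k c) x) / \<bar>fsum r k c x\<bar>) powr \<gamma>) \<partial>lborel) < \<infinity>
             \<longleftrightarrow> \<gamma> < 1))"
proof -
  note bij = assms(5) and k = assms(3,4) and r = assms(6)
  have rmin: "\<forall>j\<in>{1..k}. r 1 \<le> r j" and rmax: "\<forall>j\<in>{1..k}. r j \<le> r k"
    using assms(7) by auto
  have "(\<integral>\<^sup>+x\<in>U. ennreal (log_grad_norm (fsum r k c) x powr \<gamma>) \<partial>lborel) < \<infinity> \<longleftrightarrow>
      \<gamma> / real (2 * r 1) < (\<Sum>j=1..k. 1 / real (2 * r j))"
    using integral_log_grad_norm_fsum_finite[OF bij k(2) r rmin assms(9)]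
      integral_log_grad_norm_fsum_infinite[OF bij k r rmax assms(8,10)] assms(11)
    by (cases "\<gamma> / real (2 * r 1) < (\<Sum>j=1..k. 1 / real (2 * r j))") (auto simp: not_less)
  then show ?thesis
    unfolding exponent_threshold_iff[OF k(1) r] by (auto simp: log_grad_norm_def)
qed

end
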